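(* Let $N>4$ and $A\in C^1(\mathbb{R}^N,\mathbb{R}^N)\cap L^\infty(\mathbb{R}^N,\mathbb{R}^N)\cap L^r(\mathbb{R}^N,\mathbb{R}^N)$ for some $1<r<N$. Then for every $\xi\in\mathbb{R}^N$, $$\lim_{\mu\to0^+}\frac12\int_{\mathbb{R}^N}|A(x)|^2|z_{\mu,\xi}(x)|^2dx=0.$$
   Context: $\kappa_N=(N(N-2))^{(N-2)/4}$ and $z_{\mu,\xi}(x)=\kappa_N\mu^{(N-2)/2}(\mu^2+|x-\xi|^2)^{-(N-2)/2}$ for $\mu>0$, $\xi\in\mathbb{R}^N$. *)

theory Defs
  imports "HOL-Analysis.Analysis"
begin

definition kappa :: "real \<Rightarrow> real" where
  "kappa N = (N * (N - 2)) powr ((N - 2) / 4)"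

definition bubble :: "real \<Rightarrow> 'a::euclidean_space \<Rightarrow> 'a \<Rightarrow> real" where
  "bubble \<mu> \<xi> x = (let N = real DIM('a) in
     kappa N * \<mu> powr ((N - 2) / 2) * (\<mu>\<^sup>2 + (norm (x - \<xi>))\<^sup>2) powr (- (N - 2) / 2))"

end

theory Submission
  imports Defs
begin

(* Only the essential boundedness of A matters. For N > 4 the bubble is square
   integrable: the substitution x = xi + mu w gives ||z_{mu,xi}||_2^2 = mu^2 ||z_{1,0}||_2^2,
   and z_{1,0}^2 = kappa_N^2 (1 + |w|^2)^(-(N-2)) is integrable because N-2 > N/2.
   For s > N/2 the bound (1 + |w|^2)^(-s) <= prod_i (1 + w_i^2)^(-s/N) and Tonelli
   reduce integrability to one dimension. Hence the integral of |A|^2 z_{mu,xi}^2 is at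
   most ||A||_oo^2 ||z_{1,0}||_2^2 mu^2. *)

lemma nn_integral_powr_tail_finite:
  fixes e :: real
  assumes "e > 1"
  shows "(\<integral>\<^sup>+t. ennreal (indicator {1..} t * t powr (-e)) \<partial>lborel) < \<infinity>"
proof -
  have "((\<lambda>t. t powr (-e)) has_integral 1 / (e - 1)) {1..}"
    using has_integral_powr_to_inf[of "-e" 1] assms by (simp add: minus_divide_right)
  then have "(\<integral>\<^sup>+t. ennreal (indicator {1..} t * t powr (-e)) \<partial>lborel) = ennreal (1 / (e - 1))"
    by (intro nn_integral_has_integral_lebesgue) auto
  then show ?thesis by simp
qed

lemma one_plus_square_powr_le_abs_powr:
  fixes s t :: real
  assumes "s > 0" "1 < \<bar>t\<bar>"
  shows "(1 + t\<^sup>2) powr (-s) \<le> \<bar>t\<bar> powr (-(2 * s))"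
proof -
  have "(1 + t\<^sup>2) powr (-s) \<le> (\<bar>t\<bar> powr 2) powr (-s)"
    using assms by (intro powr_mono2') auto
  also have "\<dots> = \<bar>t\<bar> powr (-(2 * s))"
    unfolding powr_powr by simp
  finally show ?thesis .
qed

lemma nn_integral_one_plus_square_powr_finite:
  fixes s :: real
  assumes "s > 1/2"
  shows "(\<integral>\<^sup>+t. ennreal ((1 + t\<^sup>2) powr (-s)) \<partial>lborel) < \<infinity>"
proof -
  define k where "k t = ennreal (indicator {1..} t * t powr (-(2 * s)))" for t :: real
  have k_measurable[measurable]: "k \<in> borel_measurable borel"
    unfolding k_def by measurable
  have "(\<integral>\<^sup>+t. ennreal ((1 + t\<^sup>2) powr (-s)) \<partial>lborel)
      \<le> (\<integral>\<^sup>+t. (indicator {-1..1} t + k t + k (-t)) \<partial>lborel)"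
  proof (intro nn_integral_mono)
    fix t :: real
    consider "\<bar>t\<bar> \<le> 1" | "t > 1" | "t < -1"
      by linarith
    then show "ennreal ((1 + t\<^sup>2) powr (-s)) \<le> indicator {-1..1} t + k t + k (-t)"
    proof cases
      case 1
      have "(1 + t\<^sup>2) powr (-s) \<le> 1"
        using assms by (simp add: powr_minus inverse_le_1_iff ge_one_powr_ge_zero)
      with 1 show ?thesis
        by (intro add_increasing2) (auto simp: indicator_def abs_le_iff)
    next
      case 2
      then have "ennreal ((1 + t\<^sup>2) powr (-s)) \<le> k t"
        using one_plus_square_powr_le_abs_powr[of s t] assms by (simp add: k_def)
      then show ?thesis
        by (metis add.commute add_increasing2 zero_le)
    next
      case 3
      then have "ennreal ((1 + t\<^sup>2) powr (-s)) \<le> k (-t)"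
        using one_plus_square_powr_le_abs_powr[of s t] assms by (simp add: k_def)
      then show ?thesis
        by (metis add_increasing zero_le)
    qed
  qed
  also have "\<dots> = 2 + (\<integral>\<^sup>+t. k t \<partial>lborel) + (\<integral>\<^sup>+t. k (-t) \<partial>lborel)"
    by (simp add: nn_integral_add)
  also have "(\<integral>\<^sup>+t. k (-t) \<partial>lborel) = (\<integral>\<^sup>+t. k t \<partial>lborel)"
    using nn_integral_real_affine[OF k_measurable, of "-1" 0] by simp
  also have "2 + (\<integral>\<^sup>+t. k t \<partial>lborel) + (\<integral>\<^sup>+t. k t \<partial>lborel) < \<infinity>"
    using nn_integral_powr_tail_finite[of "2 * s"] assms by (simp add: k_def less_top)
  finally show ?thesis .
qed

lemma one_plus_norm_square_powr_le_prod:
  fixes w :: "'a::euclidean_space" and s :: real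
  assumes "s \<ge> 0"
  shows "(1 + (norm w)\<^sup>2) powr (-s) \<le> (\<Prod>b\<in>Basis. (1 + (w \<bullet> b)\<^sup>2) powr (-(s / DIM('a))))"
proof -
  have pos: "1 + (norm w)\<^sup>2 > 0"
    by (simp add: add_pos_nonneg)
  have "(1 + (norm w)\<^sup>2) powr (-s) = ((1 + (norm w)\<^sup>2) powr (-(s / DIM('a)))) powr DIM('a)"
    by (simp add: powr_powr)
  also have "\<dots> = ((1 + (norm w)\<^sup>2) powr (-(s / DIM('a)))) ^ DIM('a)"
    using pos by (simp add: powr_realpow)
  also have "\<dots> = (\<Prod>b\<in>(Basis::'a set). (1 + (norm w)\<^sup>2) powr (-(s / DIM('a))))"
    by simp
  also have "\<dots> \<le> (\<Prod>b\<in>Basis. (1 + (w \<bullet> b)\<^sup>2) powr (-(s / DIM('a))))"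
  proof (intro prod_mono conjI)
    fix b :: 'a
    assume "b \<in> Basis"
    then have "(w \<bullet> b)\<^sup>2 \<le> (norm w)\<^sup>2"
      by (metis Basis_le_norm abs_ge_zero power2_abs power_mono)
    then show "(1 + (norm w)\<^sup>2) powr (-(s / DIM('a))) \<le> (1 + (w \<bullet> b)\<^sup>2) powr (-(s / DIM('a)))"
      using assms by (intro powr_mono2') (auto intro: add_pos_nonneg)
  qed simp
  finally show ?thesis .
qed

lemma nn_integral_one_plus_norm_square_powr_finite:
  assumes "s > DIM('a::euclidean_space) / 2"
  shows "(\<integral>\<^sup>+w. ennreal ((1 + (norm (w::'a))\<^sup>2) powr (-s)) \<partial>lborel) < \<infinity>"
proof -
  have "s \<ge> 0"
    using assms of_nat_0_le_iff[of "DIM('a)"] by linarith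
  then have "ennreal ((1 + (norm w)\<^sup>2) powr (-s))
      \<le> (\<Prod>b\<in>Basis. ennreal ((1 + (w \<bullet> b)\<^sup>2) powr (-(s / DIM('a)))))" for w :: 'a
    using one_plus_norm_square_powr_le_prod[of s w] by (simp add: prod_ennreal ennreal_leI)
  then have "(\<integral>\<^sup>+w. ennreal ((1 + (norm (w::'a))\<^sup>2) powr (-s)) \<partial>lborel)
     \<le> (\<integral>\<^sup>+w. (\<Prod>b\<in>(Basis::'a set). ennreal ((1 + (w \<bullet> b)\<^sup>2) powr (-(s / DIM('a))))) \<partial>lborel)"
    by (intro nn_integral_mono)
  also have "\<dots> = (\<Prod>b\<in>(Basis::'a set). (\<integral>\<^sup>+t. ennreal ((1 + t\<^sup>2) powr (-(s / DIM('a)))) \<partial>lborel))"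
    by (rule nn_integral_lborel_prod) auto
  also have "\<dots> < \<infinity>"
    using nn_integral_one_plus_square_powr_finite[of "s / DIM('a)"] assms
    by (simp add: field_simps power_less_top_ennreal)
  finally show ?thesis .
qed

lemma bubble_rescale:
  fixes \<xi> w :: "'a::euclidean_space"
  assumes "\<mu> > 0"
  shows "bubble \<mu> \<xi> (\<xi> + \<mu> *\<^sub>R w) = \<mu> powr (-(real DIM('a) - 2) / 2) * bubble 1 0 w"
proof -
  define e where "e = -(real DIM('a) - 2) / 2"
  have minus_e: "(real DIM('a) - 2) / 2 = - e"
    unfolding e_def by (simp add: field_simps)
  have "(\<mu>\<^sup>2 * (1 + (norm w)\<^sup>2)) powr e = \<mu> powr (2 * e) * (1 + (norm w)\<^sup>2) powr e"
    using assms by (simp add: powr_mult powr_powr[symmetric] powr_realpow)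
  moreover have "\<mu>\<^sup>2 + (norm (\<xi> + \<mu> *\<^sub>R w - \<xi>))\<^sup>2 = \<mu>\<^sup>2 * (1 + (norm w)\<^sup>2)"
    using assms by (simp add: power_mult_distrib algebra_simps)
  moreover have "\<mu> powr (-e) * \<mu> powr (2 * e) = \<mu> powr e"
    by (simp flip: powr_add)
  ultimately show ?thesis
    unfolding bubble_def Let_def e_def[symmetric] minus_e by (simp add: mult_ac)
qed

lemma bubble_measurable[measurable]: "bubble \<mu> \<xi> \<in> borel_measurable borel"
  unfolding bubble_def Let_def by measurable

lemma nn_integral_bubble_square:
  fixes \<xi> :: "'a::euclidean_space"
  assumes "\<mu> > 0"
  shows "(\<integral>\<^sup>+x. ennreal ((bubble \<mu> \<xi> x)\<^sup>2) \<partial>lborel)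
    = ennreal (\<mu>\<^sup>2) * (\<integral>\<^sup>+w. ennreal ((bubble 1 0 (w::'a))\<^sup>2) \<partial>lborel)"
proof -
  have scaling: "\<mu> ^ DIM('a) * (bubble \<mu> \<xi> (\<xi> + \<mu> *\<^sub>R w))\<^sup>2 = \<mu>\<^sup>2 * (bubble 1 0 w)\<^sup>2" for w :: 'a
  proof -
    have "\<mu> ^ DIM('a) * (\<mu> powr (-(real DIM('a) - 2) / 2))\<^sup>2
        = \<mu> powr (real DIM('a) + 2 * (-(real DIM('a) - 2) / 2))"
      using assms by (simp add: powr_power powr_add powr_realpow)
    also have "\<dots> = \<mu> powr 2"
      by (simp add: field_simps)
    also have "\<dots> = \<mu>\<^sup>2"
      using assms by simp
    finally show ?thesis
      unfolding bubble_rescale[OF assms] power_mult_distrib by (simp add: mult.assoc)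
  qed
  have "(\<integral>\<^sup>+x. ennreal ((bubble \<mu> \<xi> x)\<^sup>2) \<partial>lborel)
     = (\<integral>\<^sup>+w. ennreal (\<mu> ^ DIM('a)) * ennreal ((bubble \<mu> \<xi> (\<xi> + \<mu> *\<^sub>R w))\<^sup>2) \<partial>lborel)"
    using assms by (subst lborel_affine[of \<mu> \<xi>]) (simp_all add: nn_integral_density nn_integral_distr)
  also have "\<dots> = (\<integral>\<^sup>+w. ennreal (\<mu>\<^sup>2) * ennreal ((bubble 1 0 (w::'a))\<^sup>2) \<partial>lborel)"
    using assms by (simp add: scaling flip: ennreal_mult)
  also have "\<dots> = ennreal (\<mu>\<^sup>2) * (\<integral>\<^sup>+w. ennreal ((bubble 1 0 (w::'a))\<^sup>2) \<partial>lborel)"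
    by (rule nn_integral_cmult) measurable
  finally show ?thesis .
qed

lemma nn_integral_standard_bubble_square_finite:
  assumes "DIM('a::euclidean_space) > 4"
  shows "(\<integral>\<^sup>+w. ennreal ((bubble 1 0 (w::'a))\<^sup>2) \<partial>lborel) < \<infinity>"
proof -
  have "(bubble 1 0 w)\<^sup>2 = (kappa DIM('a))\<^sup>2 * (1 + (norm w)\<^sup>2) powr (-(real DIM('a) - 2))" for w :: 'a
  proof -
    have "1 + (norm w)\<^sup>2 \<noteq> 0"
      by (metis add_pos_nonneg less_irrefl zero_le_power2 zero_less_one)
    then have "((1 + (norm w)\<^sup>2) powr (-(real DIM('a) - 2) / 2))\<^sup>2
        = (1 + (norm w)\<^sup>2) powr (2 * (-(real DIM('a) - 2) / 2))"
      by (subst powr_power) simp_all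
    also have "2 * (-(real DIM('a) - 2) / 2) = -(real DIM('a) - 2)"
      by simp
    finally have "((1 + (norm w)\<^sup>2) powr (-(real DIM('a) - 2) / 2))\<^sup>2
        = (1 + (norm w)\<^sup>2) powr (-(real DIM('a) - 2))" .
    then show ?thesis
      by (simp add: bubble_def Let_def power_mult_distrib)
  qed
  then have "(\<integral>\<^sup>+w. ennreal ((bubble 1 0 (w::'a))\<^sup>2) \<partial>lborel)
     = ennreal ((kappa DIM('a))\<^sup>2)
       * (\<integral>\<^sup>+w. ennreal ((1 + (norm (w::'a))\<^sup>2) powr (-(real DIM('a) - 2))) \<partial>lborel)"
    by (simp add: nn_integral_cmult ennreal_mult)
  also have "\<dots> < \<infinity>"
    using nn_integral_one_plus_norm_square_powr_finite[of "real DIM('a) - 2", where 'a='a] assms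
    by (simp add: ennreal_mult_less_top)
  finally show ?thesis .
qed

lemma integral_mult_le_of_AE_bound:
  fixes f g :: "'b \<Rightarrow> real"
  assumes [measurable]: "f \<in> borel_measurable M" "g \<in> borel_measurable M"
    and "\<And>x. 0 \<le> f x" "\<And>x. 0 \<le> g x" "AE x in M. g x \<le> K" "0 \<le> K"
    and "(\<integral>\<^sup>+x. f x \<partial>M) \<le> ennreal c" "0 \<le> c"
  shows "(LINT x|M. g x * f x) \<le> K * c"
proof -
  have "(LINT x|M. g x * f x) = enn2real (\<integral>\<^sup>+x. ennreal (g x * f x) \<partial>M)"
    using assms by (intro integral_eq_nn_integral) auto
  also have "\<dots> \<le> K * c"
  proof (rule enn2real_leI)
    show "0 \<le> K * c"
      using assms by simp
    have "(\<integral>\<^sup>+x. ennreal (g x * f x) \<partial>M) \<le> (\<integral>\<^sup>+x. ennreal K * ennreal (f x) \<partial>M)"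
      using assms(5)
    proof (intro nn_integral_mono_AE, eventually_elim)
      case (elim x)
      then have "g x * f x \<le> K * f x"
        using assms(3) by (intro mult_right_mono)
      then show ?case
        using assms(3,6) by (simp add: ennreal_leI flip: ennreal_mult)
    qed
    also have "\<dots> = ennreal K * (\<integral>\<^sup>+x. f x \<partial>M)"
      by (rule nn_integral_cmult) measurable
    also have "\<dots> \<le> ennreal (K * c)"
      using assms(6-8) by (simp add: ennreal_mult mult_left_mono)
    finally show "(\<integral>\<^sup>+x. ennreal (g x * f x) \<partial>M) \<le> ennreal (K * c)" .
  qed
  finally show ?thesis .
qed

lemma tendsto_integral_bounded_weight_bubble_square:
  fixes g :: "'a::euclidean_space \<Rightarrow> real"
  assumes "DIM('a) > 4"
    and [measurable]: "g \<in> borel_measurable borel"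
    and "\<And>x. 0 \<le> g x" "AE x in lborel. g x \<le> K"
  shows "((\<lambda>\<mu>. LINT x|lborel. g x * (bubble \<mu> \<xi> x)\<^sup>2) \<longlongrightarrow> 0) (at_right 0)"
proof -
  obtain I where I: "(\<integral>\<^sup>+w. ennreal ((bubble 1 0 (w::'a))\<^sup>2) \<partial>lborel) = ennreal I" "0 \<le> I"
    using nn_integral_standard_bubble_square_finite[OF assms(1)] by (auto simp: less_top_ennreal)
  have g_bound: "AE x in lborel. g x \<le> max K 0"
    using assms(4) by eventually_elim simp
  have bound: "0 \<le> (LINT x|lborel. g x * (bubble \<mu> \<xi> x)\<^sup>2)
      \<and> (LINT x|lborel. g x * (bubble \<mu> \<xi> x)\<^sup>2) \<le> max K 0 * (\<mu>\<^sup>2 * I)" if "\<mu> > 0" for \<mu>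
  proof
    show "0 \<le> (LINT x|lborel. g x * (bubble \<mu> \<xi> x)\<^sup>2)"
      using assms(3) by (intro integral_nonneg_AE) simp
    have "(\<integral>\<^sup>+x. ennreal ((bubble \<mu> \<xi> x)\<^sup>2) \<partial>lborel) = ennreal (\<mu>\<^sup>2 * I)"
      unfolding nn_integral_bubble_square[OF that] I(1) using I(2) by (simp add: ennreal_mult)
    then show "(LINT x|lborel. g x * (bubble \<mu> \<xi> x)\<^sup>2) \<le> max K 0 * (\<mu>\<^sup>2 * I)"
      using g_bound I(2) assms(3) by (intro integral_mult_le_of_AE_bound) simp_all
  qed
  have majorant_limit: "((\<lambda>\<mu>. max K 0 * (\<mu>\<^sup>2 * I)) \<longlongrightarrow> 0) (at_right (0::real))"
    by (auto intro!: tendsto_eq_intros)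
  show ?thesis
  proof (rule tendsto_sandwich[OF _ _ tendsto_const majorant_limit])
    show "\<forall>\<^sub>F \<mu> in at_right 0. 0 \<le> (LINT x|lborel. g x * (bubble \<mu> \<xi> x)\<^sup>2)"
      using bound by (intro eventually_at_rightI[of 0 1]) auto
    show "\<forall>\<^sub>F \<mu> in at_right 0. (LINT x|lborel. g x * (bubble \<mu> \<xi> x)\<^sup>2) \<le> max K 0 * (\<mu>\<^sup>2 * I)"
      using bound by (intro eventually_at_rightI[of 0 1]) auto
  qed
qed

theorem mainTheorem7:
  fixes A :: "'a::euclidean_space \<Rightarrow> 'a" and r :: real
  assumes dim: "DIM('a) > 4"
    and C1: "\<exists>A'. (\<forall>x. (A has_derivative blinfun_apply (A' x)) (at x)) \<and> continuous_on UNIV A'"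
    and Linf: "A \<in> borel_measurable lborel" "\<exists>M. AE x in lborel. norm (A x) \<le> M"
    and r: "1 < r" "r < real DIM('a)"
    and Lr: "integrable lborel (\<lambda>x. norm (A x) powr r)"
  shows "\<forall>\<xi>. ((\<lambda>\<mu>. (1/2) * (LINT x|lborel. (norm (A x))\<^sup>2 * (bubble \<mu> \<xi> x)\<^sup>2)) \<longlongrightarrow> 0) (at_right 0)"
proof
  fix \<xi> :: 'a
  obtain M where "AE x in lborel. norm (A x) \<le> M"
    using Linf(2) by blast
  then have "AE x in lborel. (norm (A x))\<^sup>2 \<le> M\<^sup>2"
    by eventually_elim (simp add: power_mono)
  moreover have "(\<lambda>x. (norm (A x))\<^sup>2) \<in> borel_measurable borel"
    using Linf(1) by measurable
  ultimately have "((\<lambda>\<mu>. LINT x|lborel. (norm (A x))\<^sup>2 * (bubble \<mu> \<xi> x)\<^sup>2) \<longlongrightarrow> 0) (at_right 0)"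
    using dim by (intro tendsto_integral_bounded_weight_bubble_square) auto
  then show "((\<lambda>\<mu>. (1/2) * (LINT x|lborel. (norm (A x))\<^sup>2 * (bubble \<mu> \<xi> x)\<^sup>2)) \<longlongrightarrow> 0) (at_right 0)"
    by (rule tendsto_mult_right_zero)
qed

end
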